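(* For the biased batched SVRG (Algorithm 3), $$b_j\,\mathbb{E}\langle e_j,\tilde x_j-\tilde x_{j-1}\rangle=-\eta_j(1-\lambda)B_j\,\mathbb{E}\langle e_j,\nabla f(\tilde x_j)\rangle-\eta_jB_j\,\mathbb{E}\|e_j\|^2.$$
   Context: Setting: $f(x)=\frac1n\sum_{i=1}^n f_i(x)$ with each $f_i:\mathbb{R}^d\to\mathbb{R}$ differentiable and $L$-smooth. For $\mathcal I\subset\{1,\dots,n\}$, $\nabla f_{\mathcal I}(x)=\frac1{|\mathcal I|}\sum_{i\in\mathcal I}\nabla f_i(x)$. $N\sim\mathrm{Geom}(\gamma')$ means $P(N=k)=(1-\gamma')\gamma'^k$, $k\ge0$. Epoch $j$ of the batched SVRG scheme: $\mathcal I_j$ uniformly random of size $B_j$, $g_j=\nabla f_{\mathcal I_j}(\tilde x_{j-1})$, $x^{(j)}_0=\tilde x_{j-1}$; $N_j\sim\mathrm{Geom}(B_j/(B_j+b_j))$ drawn independently (mean $B_j/b_j$); for $k=0,\dots,N_j-1$, $\tilde{\mathcal I}_k$ uniformly random of size $b_j$ and $x^{(j)}_{k+1}=x^{(j)}_k-\eta_jv^{(j)}_k$; $\tilde x_j=x^{(j)}_{N_j}$. Algorithm 3 (biased, $0<\lambda<1$): $v^{(j)}_k=(1-\lambda)(\nabla f_{\tilde{\mathcal I}_k}(x^{(j)}_k)-\nabla f_{\tilde{\mathcal I}_k}(x^{(j)}_0))+\lambda g_j$, and $e_j=\lambda\nabla f_{\mathcal I_j}(\tilde x_{j-1})-(1-\lambda)\nabla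 f(\tilde x_{j-1})$. $\mathbb{E}$ is expectation over all randomness. *)

theory Defs
  imports "HOL-Probability.Probability"
begin

definition batch_grad :: "(nat \<Rightarrow> 'a::real_vector \<Rightarrow> 'a) \<Rightarrow> nat set \<Rightarrow> 'a \<Rightarrow> 'a" where
  "batch_grad G I x = (1 / real (card I)) *\<^sub>R (\<Sum>i\<in>I. G i x)"

definition unif_subset :: "nat \<Rightarrow> nat \<Rightarrow> nat set pmf" where
  "unif_subset n m = pmf_of_set {S. S \<subseteq> {1..n} \<and> card S = m}"

definition alg3_dir :: "(nat \<Rightarrow> 'a::real_vector \<Rightarrow> 'a) \<Rightarrow> real \<Rightarrow> 'a \<Rightarrow> 'a \<Rightarrow> nat set \<Rightarrow> 'a \<Rightarrow> 'a" where
  "alg3_dir G lam g x0 S x = (1 - lam) *\<^sub>R (batch_grad G S x - batch_grad G S x0) + lam *\<^sub>R g"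

fun alg3_inner :: "(nat \<Rightarrow> 'a::real_vector \<Rightarrow> 'a) \<Rightarrow> nat \<Rightarrow> nat \<Rightarrow> real \<Rightarrow> real \<Rightarrow> 'a \<Rightarrow> 'a
     \<Rightarrow> nat \<Rightarrow> 'a \<Rightarrow> 'a pmf" where
  "alg3_inner G n b eta lam g x0 0 x = return_pmf x"
| "alg3_inner G n b eta lam g x0 (Suc k) x =
     do { S \<leftarrow> unif_subset n b;
          alg3_inner G n b eta lam g x0 k (x - eta *\<^sub>R alg3_dir G lam g x0 S x) }"

text \<open>One epoch j of Algorithm 3, with x~_{j-1} distributed according to p.
  Returns the joint distribution of (x~_{j-1}, I_j, x~_j).
  N_j ~ Geom(B/(B+b)), i.e. P(N = k) = (1 - B/(B+b)) (B/(B+b))^k, which is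
  geometric_pmf (b/(B+b)) in Isabelle's convention P(N = k) = (1-q)^k q.\<close>
definition alg3_epoch :: "(nat \<Rightarrow> 'a::real_vector \<Rightarrow> 'a) \<Rightarrow> nat \<Rightarrow> nat \<Rightarrow> nat \<Rightarrow> real \<Rightarrow> real
     \<Rightarrow> 'a pmf \<Rightarrow> ('a \<times> nat set \<times> 'a) pmf" where
  "alg3_epoch G n B b eta lam p =
     do { x0 \<leftarrow> p;
          I \<leftarrow> unif_subset n B;
          N \<leftarrow> geometric_pmf (real b / (real B + real b));
          xN \<leftarrow> alg3_inner G n b eta lam (batch_grad G I x0) x0 N x0;
          return_pmf (x0, I, xN) }"

definition alg3_err :: "(nat \<Rightarrow> 'a::real_vector \<Rightarrow> 'a) \<Rightarrow> nat \<Rightarrow> real \<Rightarrow> nat set \<Rightarrow> 'a \<Rightarrow> 'a" where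
  "alg3_err G n lam I x0 = lam *\<^sub>R batch_grad G I x0 - (1 - lam) *\<^sub>R batch_grad G {1..n} x0"

end

theory Submission
  imports Defs
begin

(* Fix x~_{j-1} = x0 and I_j, so that g and e are fixed. The inner iterates form a Markov
   chain, stopped at an independent time N with P(N = 0) = q = b/(B+b). Unfolding one step of
   the geometric law gives E phi(x_N) = q phi(x0) + (1 - q) E phi(x_{N+1}), and for
   phi x = <e, x - x0> a single step changes phi in expectation by -eta <e, E v>, where the
   unbiasedness of uniform mini-batch means gives E v = (1-lam)(grad f x - grad f x0) + lam g
   = (1-lam) grad f x + e. Hence q E<e, x_N - x0> = -(1-q) eta E[(1-lam)<e, grad f x_N> + |e|^2]
   with (1-q)/q = B/b, and averaging over x0 and I_j gives the identity. *)

lemma integrable_bind_pmfD: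
  fixes f :: "'b \<Rightarrow> real"
  assumes "integrable (bind_pmf M N) f" "x \<in> set_pmf M"
  shows "integrable (N x) f"
proof -
  have "(\<integral>\<^sup>+x. \<integral>\<^sup>+y. ennreal (norm (f y)) \<partial>N x \<partial>M) < \<infinity>"
    using assms(1) by (simp add: integrable_iff_bounded)
  then have "AE x in M. (\<integral>\<^sup>+y. ennreal (norm (f y)) \<partial>N x) \<noteq> \<infinity>"
    by (intro nn_integral_PInf_AE) auto
  then show ?thesis
    using assms(2) by (auto simp: AE_measure_pmf_iff integrable_iff_bounded less_top)
qed

lemma integrable_bind_pmf_integral:
  fixes f :: "'b \<Rightarrow> real"
  assumes int: "integrable (bind_pmf M N) f"
  shows "integrable M (\<lambda>x. \<integral>y. f y \<partial>N x)"
proof -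
  have "(\<integral>\<^sup>+x. ennreal (norm (\<integral>y. f y \<partial>N x)) \<partial>M) \<le> (\<integral>\<^sup>+x. \<integral>\<^sup>+y. ennreal (norm (f y)) \<partial>N x \<partial>M)"
  proof (intro nn_integral_mono_AE, unfold AE_measure_pmf_iff, intro ballI)
    fix x assume "x \<in> set_pmf M"
    then have "integrable (N x) f" by (rule integrable_bind_pmfD[OF int])
    then have "(\<integral>\<^sup>+y. ennreal (norm (f y)) \<partial>N x) = ennreal (\<integral>y. norm (f y) \<partial>N x)"
      by (intro nn_integral_eq_integral) auto
    then show "ennreal (norm (\<integral>y. f y \<partial>N x)) \<le> (\<integral>\<^sup>+y. ennreal (norm (f y)) \<partial>N x)"
      by (simp add: ennreal_leI integral_norm_bound)
  qed
  also have "\<dots> < \<infinity>"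
    using int by (simp add: integrable_iff_bounded)
  finally show ?thesis
    by (simp add: integrable_iff_bounded)
qed

lemma integral_bind_pmf_nonneg:
  fixes f :: "'b \<Rightarrow> real"
  assumes int: "integrable (bind_pmf M N) f" and nonneg: "\<And>y. 0 \<le> f y"
  shows "(\<integral>y. f y \<partial>bind_pmf M N) = (\<integral>x. \<integral>y. f y \<partial>N x \<partial>M)"
proof -
  have "ennreal (\<integral>y. f y \<partial>bind_pmf M N) = (\<integral>\<^sup>+x. \<integral>\<^sup>+y. ennreal (f y) \<partial>N x \<partial>M)"
    using int nonneg by (simp add: nn_integral_eq_integral[symmetric])
  also have "\<dots> = (\<integral>\<^sup>+x. ennreal (\<integral>y. f y \<partial>N x) \<partial>M)"
    using integrable_bind_pmfD[OF int]
    by (intro nn_integral_cong_AE) (auto simp: AE_measure_pmf_iff nonneg intro!: nn_integral_eq_integral)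
  also have "\<dots> = ennreal (\<integral>x. \<integral>y. f y \<partial>N x \<partial>M)"
    using integrable_bind_pmf_integral[OF int] nonneg
    by (intro nn_integral_eq_integral) (auto intro: integral_nonneg)
  finally show ?thesis
    by (subst (asm) ennreal_inj) (auto intro!: integral_nonneg integral_nonneg_AE nonneg)
qed

(* The library's integral_bind only covers bounded integrands. *)
lemma integral_bind_pmf_integrable:
  fixes f :: "'b \<Rightarrow> real"
  assumes int: "integrable (bind_pmf M N) f"
  shows "(\<integral>y. f y \<partial>bind_pmf M N) = (\<integral>x. \<integral>y. f y \<partial>N x \<partial>M)"
proof -
  define fp fm where "fp = (\<lambda>y. max (f y) 0)" and "fm = (\<lambda>y. max (- f y) 0)"
  have f_eq: "f = (\<lambda>y. fp y - fm y)"
    by (auto simp: fp_def fm_def)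
  have ip: "integrable (bind_pmf M N) fp" and im: "integrable (bind_pmf M N) fm"
    using int by (auto simp: fp_def fm_def)
  have fp_nonneg: "0 \<le> fp y" and fm_nonneg: "0 \<le> fm y" for y
    by (auto simp: fp_def fm_def)
  have inner: "(\<integral>y. f y \<partial>N x) = (\<integral>y. fp y \<partial>N x) - (\<integral>y. fm y \<partial>N x)" if "x \<in> set_pmf M" for x
    using integrable_bind_pmfD[OF ip that] integrable_bind_pmfD[OF im that] by (simp add: f_eq)
  have "(\<integral>y. f y \<partial>bind_pmf M N) = (\<integral>y. fp y \<partial>bind_pmf M N) - (\<integral>y. fm y \<partial>bind_pmf M N)"
    using ip im by (simp add: f_eq)
  also have "\<dots> = (\<integral>x. (\<integral>y. fp y \<partial>N x) - (\<integral>y. fm y \<partial>N x) \<partial>M)"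
    using integrable_bind_pmf_integral[OF ip] integrable_bind_pmf_integral[OF im]
    by (simp add: integral_bind_pmf_nonneg[OF ip fp_nonneg] integral_bind_pmf_nonneg[OF im fm_nonneg])
  also have "\<dots> = (\<integral>x. \<integral>y. f y \<partial>N x \<partial>M)"
    using inner by (intro integral_cong_AE) (auto simp: AE_measure_pmf_iff)
  finally show ?thesis .
qed

lemma integral_bind_pmf_cong:
  fixes f g :: "'b \<Rightarrow> real"
  assumes "integrable (bind_pmf M N) f" "integrable (bind_pmf M N) g"
    and "\<And>x. x \<in> set_pmf M \<Longrightarrow> (\<integral>y. f y \<partial>N x) = (\<integral>y. g y \<partial>N x)"
  shows "(\<integral>y. f y \<partial>bind_pmf M N) = (\<integral>y. g y \<partial>bind_pmf M N)"
  unfolding integral_bind_pmf_integrable[OF assms(1)] integral_bind_pmf_integrable[OF assms(2)]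
  using assms(3) by (intro integral_cong_AE) (auto simp: AE_measure_pmf_iff)

lemma card_subsets_containing:
  assumes "finite A" "a \<in> A" "0 < k"
  shows "card {S. S \<subseteq> A \<and> card S = k \<and> a \<in> S} = (card A - 1) choose (k - 1)"
proof -
  have "bij_betw (insert a) {T. T \<subseteq> A - {a} \<and> card T = k - 1} {S. S \<subseteq> A \<and> card S = k \<and> a \<in> S}"
  proof (rule bij_betw_byWitness[where f'="\<lambda>S. S - {a}"])
    show "insert a ` {T. T \<subseteq> A - {a} \<and> card T = k - 1} \<subseteq> {S. S \<subseteq> A \<and> card S = k \<and> a \<in> S}"
    proof clarify
      fix T assume "T \<subseteq> A - {a}" "card T = k - 1"
      moreover from this have "finite T" "a \<notin> T"
        using assms(1) finite_subset by blast+
      ultimately show "insert a T \<subseteq> A \<and> card (insert a T) = k \<and> a \<in> insert a T"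
        using assms by auto
    qed
    show "(\<lambda>S. S - {a}) ` {S. S \<subseteq> A \<and> card S = k \<and> a \<in> S} \<subseteq> {T. T \<subseteq> A - {a} \<and> card T = k - 1}"
      using assms by (auto dest: finite_subset)
  qed auto
  then have "card {S. S \<subseteq> A \<and> card S = k \<and> a \<in> S} = card {T. T \<subseteq> A - {a} \<and> card T = k - 1}"
    by (simp add: bij_betw_same_card)
  also have "\<dots> = card (A - {a}) choose (k - 1)"
    using assms by (intro n_subsets) auto
  finally show ?thesis
    using assms by simp
qed

lemma sum_subsets_of_card_sum:
  fixes w :: "'a \<Rightarrow> real"
  assumes "finite A" "0 < k"
  shows "(\<Sum>S\<in>{S. S \<subseteq> A \<and> card S = k}. \<Sum>a\<in>S. w a) = real ((card A - 1) choose (k - 1)) * (\<Sum>a\<in>A. w a)"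
proof -
  let ?F = "{S. S \<subseteq> A \<and> card S = k}"
  have "(\<Sum>S\<in>?F. \<Sum>a\<in>S. w a) = (\<Sum>S\<in>?F. \<Sum>a\<in>A. if a \<in> S then w a else 0)"
  proof (rule sum.cong[OF refl])
    fix S assume "S \<in> ?F"
    then have "A \<inter> S = S" by auto
    then show "(\<Sum>a\<in>S. w a) = (\<Sum>a\<in>A. if a \<in> S then w a else 0)"
      using sum.inter_restrict[OF assms(1), of w S] by simp
  qed
  also have "\<dots> = (\<Sum>a\<in>A. \<Sum>S\<in>?F. if a \<in> S then w a else 0)"
    by (rule sum.swap)
  also have "\<dots> = (\<Sum>a\<in>A. real (card {S. S \<subseteq> A \<and> card S = k \<and> a \<in> S}) * w a)"
    using assms(1) by (intro sum.cong refl) (simp add: sum.If_cases Int_def conj_ac)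
  also have "\<dots> = (\<Sum>a\<in>A. real ((card A - 1) choose (k - 1)) * w a)"
    using assms by (intro sum.cong refl) (simp add: card_subsets_containing)
  finally show ?thesis
    by (simp add: sum_distrib_left)
qed

lemma subsets_of_card_nonempty:
  assumes "m \<le> n"
  shows "{S. S \<subseteq> {1..n} \<and> card S = m} \<noteq> {}"
proof -
  have "card {S. S \<subseteq> {1..n} \<and> card S = m} = n choose m"
    using n_subsets[of "{1..n}" m] by simp
  then show ?thesis
    using assms by (metis card.empty zero_less_binomial_iff less_irrefl_nat)
qed

lemma set_pmf_unif_subset:
  "m \<le> n \<Longrightarrow> set_pmf (unif_subset n m) = {S. S \<subseteq> {1..n} \<and> card S = m}"
  unfolding unif_subset_def by (rule set_pmf_of_set) (use subsets_of_card_nonempty in auto)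

lemma expectation_unif_subset_mean:
  fixes w :: "nat \<Rightarrow> real"
  assumes "0 < m" "m \<le> n"
  shows "(\<integral>S. (\<Sum>i\<in>S. w i) / real m \<partial>unif_subset n m) = (\<Sum>i\<in>{1..n}. w i) / real n"
proof -
  let ?F = "{S. S \<subseteq> {1..n} \<and> card S = m}"
  have card_F: "card ?F = n choose m"
    using n_subsets[of "{1..n}" m] by simp
  have choose_eq: "real m * real (n choose m) = real n * real ((n - 1) choose (m - 1))"
    using times_binomial_minus1_eq[of m n] assms by (metis of_nat_mult)
  have "(\<integral>S. (\<Sum>i\<in>S. w i) / real m \<partial>unif_subset n m) = (\<Sum>S\<in>?F. (\<Sum>i\<in>S. w i) / real m) / card ?F"
    unfolding unif_subset_def by (rule integral_pmf_of_set) (use subsets_of_card_nonempty assms in auto)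
  also have "\<dots> = real ((n - 1) choose (m - 1)) * (\<Sum>i\<in>{1..n}. w i) / (real m * real (n choose m))"
    unfolding card_F using assms by (simp add: sum_subsets_of_card_sum flip: sum_divide_distrib)
  also have "\<dots> = (\<Sum>i\<in>{1..n}. w i) / real n"
    using assms choose_eq by (simp add: field_simps)
  finally show ?thesis .
qed

lemma expectation_inner_batch_grad:
  fixes G :: "nat \<Rightarrow> 'a::real_inner \<Rightarrow> 'a"
  assumes "0 < m" "m \<le> n"
  shows "(\<integral>S. inner u (batch_grad G S y) \<partial>unif_subset n m) = inner u (batch_grad G {1..n} y)"
proof -
  have "(\<integral>S. inner u (batch_grad G S y) \<partial>unif_subset n m)
      = (\<integral>S. (\<Sum>i\<in>S. inner u (G i y)) / real m \<partial>unif_subset n m)"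
    using assms(2) by (intro integral_cong_AE)
      (auto simp: AE_measure_pmf_iff set_pmf_unif_subset batch_grad_def inner_sum_right)
  also have "\<dots> = inner u (batch_grad G {1..n} y)"
    using expectation_unif_subset_mean[OF assms, of "\<lambda>i. inner u (G i y)"]
    by (simp add: batch_grad_def inner_sum_right)
  finally show ?thesis .
qed

lemma expectation_inner_alg3_dir:
  fixes G :: "nat \<Rightarrow> 'a::real_inner \<Rightarrow> 'a"
  assumes "0 < m" "m \<le> n"
  shows "(\<integral>S. inner u (alg3_dir G lam g x0 S z) \<partial>unif_subset n m)
       = inner u ((1 - lam) *\<^sub>R (batch_grad G {1..n} z - batch_grad G {1..n} x0) + lam *\<^sub>R g)"
proof -
  have "finite (set_pmf (unif_subset n m))"
    using assms(2) by (simp add: set_pmf_unif_subset)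
  then show ?thesis
    using assms
    by (simp add: alg3_dir_def inner_add_right inner_diff_right integrable_measure_pmf_finite
        expectation_inner_batch_grad)
qed

lemma integral_geometric_stopped_chain:
  fixes q :: real and X :: "nat \<Rightarrow> 'a pmf" and K :: "'a \<Rightarrow> 'a pmf" and \<phi> d :: "'a \<Rightarrow> real"
  defines "\<mu> \<equiv> bind_pmf (geometric_pmf q) X"
  assumes q: "0 < q" "q < 1"
    and X_0: "X 0 = return_pmf x0" and X_Suc: "\<And>k. X (Suc k) = bind_pmf (X k) K"
    and drift: "\<And>z. (\<integral>y. \<phi> y \<partial>K z) = \<phi> z + d z"
    and int_\<phi>: "integrable \<mu> \<phi>" and int_d: "integrable \<mu> d"
  shows "q * (\<integral>x. \<phi> x \<partial>\<mu>) = q * \<phi> x0 + (1 - q) * (\<integral>x. d x \<partial>\<mu>)"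
proof -
  define \<nu> where "\<nu> = bind_pmf \<mu> K"
  have \<mu>_unfold: "\<mu> = bind_pmf (bernoulli_pmf q) (\<lambda>c. if c then return_pmf x0 else \<nu>)"
    unfolding \<mu>_def \<nu>_def using q
    by (subst geometric_bind_pmf_unfold)
      (auto simp: bind_assoc_pmf bind_return_pmf bind_map_pmf X_0 X_Suc intro!: bind_pmf_cong)
  have int_\<mu>_unfold: "integrable (bind_pmf (bernoulli_pmf q) (\<lambda>c. if c then return_pmf x0 else \<nu>)) \<phi>"
    using int_\<phi> by (simp flip: \<mu>_unfold)
  have int_\<nu>: "integrable \<nu> \<phi>"
    using integrable_bind_pmfD[OF int_\<mu>_unfold, of False] q by simp
  have "(\<integral>x. \<phi> x \<partial>\<mu>) = q * \<phi> x0 + (1 - q) * (\<integral>x. \<phi> x \<partial>\<nu>)"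
    using q by (subst \<mu>_unfold, subst integral_bind_pmf_integrable[OF int_\<mu>_unfold]) simp
  also have "(\<integral>x. \<phi> x \<partial>\<nu>) = (\<integral>z. \<phi> z + d z \<partial>\<mu>)"
    using int_\<nu> by (simp add: \<nu>_def integral_bind_pmf_integrable drift)
  also have "\<dots> = (\<integral>x. \<phi> x \<partial>\<mu>) + (\<integral>x. d x \<partial>\<mu>)"
    using int_\<phi> int_d by simp
  finally show ?thesis
    by (simp add: algebra_simps)
qed

lemma alg3_inner_Suc_last:
  "alg3_inner G n b eta lam g x0 (Suc k) y =
     bind_pmf (alg3_inner G n b eta lam g x0 k y)
       (\<lambda>z. map_pmf (\<lambda>S. z - eta *\<^sub>R alg3_dir G lam g x0 S z) (unif_subset n b))"
proof (induction k arbitrary: y)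
  case 0
  show ?case
    by (simp add: bind_return_pmf map_pmf_def)
next
  case (Suc k)
  define step where "step = (\<lambda>z. map_pmf (\<lambda>S. z - eta *\<^sub>R alg3_dir G lam g x0 S z) (unif_subset n b))"
  have "alg3_inner G n b eta lam g x0 (Suc (Suc k)) y
      = bind_pmf (unif_subset n b)
          (\<lambda>S. bind_pmf (alg3_inner G n b eta lam g x0 k (y - eta *\<^sub>R alg3_dir G lam g x0 S y)) step)"
    unfolding step_def by (simp only: alg3_inner.simps(2)[of _ _ _ _ _ _ _ "Suc k"] Suc.IH)
  also have "\<dots> = bind_pmf (alg3_inner G n b eta lam g x0 (Suc k) y) step"
    by (simp only: alg3_inner.simps(2) bind_assoc_pmf)
  finally show ?case
    by (simp only: step_def)
qed

lemma alg3_step_drift: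
  fixes G :: "nat \<Rightarrow> 'a::real_inner \<Rightarrow> 'a"
  assumes "0 < b" "b \<le> n"
  shows "(\<integral>y. inner u (y - x0) \<partial>map_pmf (\<lambda>S. z - eta *\<^sub>R alg3_dir G lam g x0 S z) (unif_subset n b))
       = inner u (z - x0)
         - eta * inner u ((1 - lam) *\<^sub>R (batch_grad G {1..n} z - batch_grad G {1..n} x0) + lam *\<^sub>R g)"
proof -
  have "finite (set_pmf (unif_subset n b))"
    using assms(2) by (simp add: set_pmf_unif_subset)
  then have "(\<integral>S. inner u (z - eta *\<^sub>R alg3_dir G lam g x0 S z - x0) \<partial>unif_subset n b)
      = inner u (z - x0) - eta * (\<integral>S. inner u (alg3_dir G lam g x0 S z) \<partial>unif_subset n b)"
    by (simp add: inner_diff_right integrable_measure_pmf_finite algebra_simps)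
  then show ?thesis
    by (simp only: integral_map_pmf expectation_inner_alg3_dir[OF assms])
qed

lemma alg3_epoch_conditional_identity:
  fixes G :: "nat \<Rightarrow> 'a::real_inner \<Rightarrow> 'a" and n B b :: nat and eta lam :: real and g x0 :: 'a
  defines "\<mu> \<equiv> bind_pmf (geometric_pmf (real b / (real B + real b)))
                 (\<lambda>N. alg3_inner G n b eta lam g x0 N x0)"
    and "e \<equiv> lam *\<^sub>R g - (1 - lam) *\<^sub>R batch_grad G {1..n} x0"
  assumes B: "0 < B" and b: "0 < b" "b \<le> n"
    and int_step: "integrable \<mu> (\<lambda>x. inner e (x - x0))"
    and int_grad: "integrable \<mu> (\<lambda>x. inner e (batch_grad G {1..n} x))"
  shows "real b * (\<integral>x. inner e (x - x0) \<partial>\<mu>)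
       = - eta * (1 - lam) * real B * (\<integral>x. inner e (batch_grad G {1..n} x) \<partial>\<mu>)
         - eta * real B * (norm e)\<^sup>2"
proof -
  define q where "q = real b / (real B + real b)"
  define d where "d = (\<lambda>x. - eta * ((1 - lam) * inner e (batch_grad G {1..n} x) + (norm e)\<^sup>2))"
  have q: "0 < q" "q < 1"
    using B b by (auto simp: q_def field_simps)
  have drift: "(\<integral>y. inner e (y - x0) \<partial>map_pmf (\<lambda>S. z - eta *\<^sub>R alg3_dir G lam g x0 S z) (unif_subset n b))
      = inner e (z - x0) + d z" for z
  proof -
    have "(1 - lam) *\<^sub>R (batch_grad G {1..n} z - batch_grad G {1..n} x0) + lam *\<^sub>R g
        = (1 - lam) *\<^sub>R batch_grad G {1..n} z + e"
      by (simp add: e_def algebra_simps)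
    then show ?thesis
      unfolding alg3_step_drift[OF b] by (simp add: d_def inner_add_right power2_norm_eq_inner)
  qed
  have int_d: "integrable \<mu> d"
    using int_grad by (simp add: d_def)
  have "q * (\<integral>x. inner e (x - x0) \<partial>\<mu>) = q * inner e (x0 - x0) + (1 - q) * (\<integral>x. d x \<partial>\<mu>)"
    unfolding \<mu>_def q_def
    by (rule integral_geometric_stopped_chain
        [where X = "\<lambda>N. alg3_inner G n b eta lam g x0 N x0"
           and K = "\<lambda>z. map_pmf (\<lambda>S. z - eta *\<^sub>R alg3_dir G lam g x0 S z) (unif_subset n b)"])
      (use int_step int_d q drift alg3_inner_Suc_last in \<open>simp_all add: \<mu>_def q_def\<close>)
  moreover have "(\<integral>x. d x \<partial>\<mu>) = - eta * ((1 - lam) * (\<integral>x. inner e (batch_grad G {1..n} x) \<partial>\<mu>) + (norm e)\<^sup>2)"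
    using int_grad by (simp add: d_def)
  ultimately show ?thesis
    using B b by (simp add: q_def field_simps)
qed

theorem lemmaB10:
  fixes f :: "nat \<Rightarrow> 'a::euclidean_space \<Rightarrow> real"
    and G :: "nat \<Rightarrow> 'a \<Rightarrow> 'a"
    and n B b :: nat and L eta lam :: real
    and p :: "'a pmf"
  assumes grad: "\<And>i x. i \<in> {1..n} \<Longrightarrow> GDERIV (f i) x :> G i x"
    and smooth: "\<And>i x y. i \<in> {1..n} \<Longrightarrow> norm (G i x - G i y) \<le> L * norm (x - y)"
    and B: "0 < B" "B \<le> n" and b: "0 < b" "b \<le> n"
    and lam: "0 < lam" "lam < 1"
    and int1: "integrable (measure_pmf (alg3_epoch G n B b eta lam p))
                 (\<lambda>(x0, I, x). inner (alg3_err G n lam I x0) (x - x0))"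
    and int2: "integrable (measure_pmf (alg3_epoch G n B b eta lam p))
                 (\<lambda>(x0, I, x). inner (alg3_err G n lam I x0) (batch_grad G {1..n} x))"
    and int3: "integrable (measure_pmf (alg3_epoch G n B b eta lam p))
                 (\<lambda>(x0, I, x). (norm (alg3_err G n lam I x0))\<^sup>2)"
  shows "real b * measure_pmf.expectation (alg3_epoch G n B b eta lam p)
            (\<lambda>(x0, I, x). inner (alg3_err G n lam I x0) (x - x0))
         = - eta * (1 - lam) * real B * measure_pmf.expectation (alg3_epoch G n B b eta lam p)
            (\<lambda>(x0, I, x). inner (alg3_err G n lam I x0) (batch_grad G {1..n} x))
           - eta * real B * measure_pmf.expectation (alg3_epoch G n B b eta lam p)
            (\<lambda>(x0, I, x). (norm (alg3_err G n lam I x0))\<^sup>2)"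
proof -
  define M where "M x0 I = bind_pmf (geometric_pmf (real b / (real B + real b)))
    (\<lambda>N. alg3_inner G n b eta lam (batch_grad G I x0) x0 N x0)" for x0 I
  define F1 F2 F3 where "F1 = (\<lambda>(x0, I, x). inner (alg3_err G n lam I x0) (x - x0))"
    and "F2 = (\<lambda>(x0, I, x). inner (alg3_err G n lam I x0) (batch_grad G {1..n} x))"
    and "F3 = (\<lambda>(x0 :: 'a, I, x :: 'a). (norm (alg3_err G n lam I x0))\<^sup>2)"
  have epoch: "alg3_epoch G n B b eta lam p
      = bind_pmf p (\<lambda>x0. bind_pmf (unif_subset n B) (\<lambda>I. map_pmf (\<lambda>x. (x0, I, x)) (M x0 I)))"
    by (simp add: alg3_epoch_def M_def map_pmf_def bind_assoc_pmf bind_return_pmf)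
  have int_lhs: "integrable (alg3_epoch G n B b eta lam p) (\<lambda>z. real b * F1 z)"
    using int1 by (simp add: F1_def)
  have int_rhs: "integrable (alg3_epoch G n B b eta lam p)
      (\<lambda>z. - eta * (1 - lam) * real B * F2 z - eta * real B * F3 z)"
    using int2 int3 by (simp add: F2_def F3_def)
  have "(\<integral>z. real b * F1 z \<partial>alg3_epoch G n B b eta lam p)
      = (\<integral>z. - eta * (1 - lam) * real B * F2 z - eta * real B * F3 z \<partial>alg3_epoch G n B b eta lam p)"
    unfolding epoch
  proof (rule integral_bind_pmf_cong; (rule integral_bind_pmf_cong)?)
    fix x0 I assume x0: "x0 \<in> set_pmf p" and I: "I \<in> set_pmf (unif_subset n B)"
    have int_M: "integrable (M x0 I) (\<lambda>x. inner (alg3_err G n lam I x0) (x - x0))"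
      "integrable (M x0 I) (\<lambda>x. inner (alg3_err G n lam I x0) (batch_grad G {1..n} x))"
      using integrable_bind_pmfD[OF integrable_bind_pmfD[OF int1[unfolded epoch] x0] I]
        integrable_bind_pmfD[OF integrable_bind_pmfD[OF int2[unfolded epoch] x0] I]
      by (simp_all add: F1_def F2_def)
    show "(\<integral>z. real b * F1 z \<partial>map_pmf (\<lambda>x. (x0, I, x)) (M x0 I))
        = (\<integral>z. - eta * (1 - lam) * real B * F2 z - eta * real B * F3 z \<partial>map_pmf (\<lambda>x. (x0, I, x)) (M x0 I))"
      using alg3_epoch_conditional_identity[OF B(1) b, of G eta lam "batch_grad G I x0" x0] int_M
      by (simp add: F1_def F2_def F3_def M_def alg3_err_def)
  qed (use int_lhs int_rhs in \<open>auto simp only: epoch intro: integrable_bind_pmfD\<close>)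
  then show ?thesis
    using int1 int2 int3 by (simp add: F1_def F2_def F3_def)
qed

end
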